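(* Let $p,k,q,n$ be positive integers. If there exist a partition of $\{1,\dots,q\}$ into $n$ weakly sum-free subsets and a partition of $\{1,\dots,p\}$ into $k$ sum-free subsets, then there exists a partition of $\{1,\dots, p(q+\lceil q/2\rceil+1)+q\}$ into $n+k$ weakly sum-free subsets.
   Context: A set $A \subseteq \mathbb{N}$ is sum-free if for all $(a,b)\in A^2$ (allowing $a=b$), $a+b \notin A$. A set $B\subseteq\mathbb{N}$ is weakly sum-free if for all $(a,b)\in B^2$ with $a\neq b$, $a+b\notin B$. *)

theory Defs
  imports Complex_Main
begin

definition sum_free :: "nat set \<Rightarrow> bool" where
  "sum_free A \<longleftrightarrow> (\<forall>a\<in>A. \<forall>b\<in>A. a + b \<notin> A)"

definition weakly_sum_free :: "nat set \<Rightarrow> bool" where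
  "weakly_sum_free B \<longleftrightarrow> (\<forall>a\<in>B. \<forall>b\<in>B. a \<noteq> b \<longrightarrow> a + b \<notin> B)"

text \<open>A partition of S into n parts (indexed 0..n-1), each satisfying P.
  Parts are pairwise disjoint and cover S; parts may be empty (colouring convention).\<close>
definition partition_into :: "(nat set \<Rightarrow> bool) \<Rightarrow> nat set \<Rightarrow> nat \<Rightarrow> bool" where
  "partition_into P S n \<longleftrightarrow> (\<exists>F :: nat \<Rightarrow> nat set.
      (\<Union>i<n. F i) = S \<and>
      (\<forall>i<n. \<forall>j<n. i \<noteq> j \<longrightarrow> F i \<inter> F j = {}) \<and>
      (\<forall>i<n. P (F i)))"

end

theory Submission
  imports Defs
begin

text \<open>Let \<open>c = \<lceil>q/2\<rceil>\<close>, \<open>h = \<lfloor>q/2\<rfloor>\<close> and \<open>m = q + c + 1\<close>.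
  The numbers in \<open>{1..pm+q}\<close> that lie in \<open>{1..q}\<close> or are \<open>am + r\<close> with \<open>a \<ge> 1\<close> and
  \<open>h < r \<le> q\<close> are coloured by the weakly sum-free class of their residue \<open>r\<close>.
  If two of them add without carry, their residues add, so they must be equal, and then one
  summand is lifted, whence \<open>2r > q\<close>; after a carry the residue is at most \<open>2q - m \<le> h\<close>.
  The remaining numbers form the blocks \<open>[am - c, am + h]\<close>, \<open>1 \<le> a \<le> p\<close>, coloured by the
  sum-free class of \<open>a\<close>; since \<open>q \<le> 2c\<close>, a sum of elements of the blocks of \<open>a\<close> and \<open>a'\<close>
  can only meet the block of \<open>a + a'\<close>.\<close>

lemma weakly_sum_free_subset: "weakly_sum_free A \<Longrightarrow> B \<subseteq> A \<Longrightarrow> weakly_sum_free B"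
  unfolding weakly_sum_free_def by blast

lemma sum_free_imp_weakly_sum_free: "sum_free A \<Longrightarrow> weakly_sum_free A"
  unfolding sum_free_def weakly_sum_free_def by blast

lemma partition_into_mono:
  assumes "\<And>A. P A \<Longrightarrow> Q A" and "partition_into P S n"
  shows "partition_into Q S n"
  using assms(2) unfolding partition_into_def by (metis assms(1))

lemma partition_into_vimage:
  assumes "partition_into Q T n" and "\<forall>x\<in>S. f x \<in> T"
    and "\<And>B. Q B \<Longrightarrow> B \<subseteq> T \<Longrightarrow> P (S \<inter> f -` B)"
  shows "partition_into P S n"
proof -
  obtain F where F: "(\<Union>i<n. F i) = T" "\<forall>i<n. \<forall>j<n. i \<noteq> j \<longrightarrow> F i \<inter> F j = {}"
      "\<forall>i<n. Q (F i)"
    using assms(1) unfolding partition_into_def by blast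
  have "(\<Union>i<n. S \<inter> f -` F i) = S"
    using F(1) assms(2) by blast
  moreover have "\<forall>i<n. \<forall>j<n. i \<noteq> j \<longrightarrow> (S \<inter> f -` F i) \<inter> (S \<inter> f -` F j) = {}"
    using F(2) by blast
  moreover have "\<forall>i<n. P (S \<inter> f -` F i)"
    using F(1,3) assms(3) by blast
  ultimately show ?thesis
    unfolding partition_into_def by blast
qed

lemma partition_into_Un:
  assumes "partition_into P S n" and "partition_into P T k" and "S \<inter> T = {}"
  shows "partition_into P (S \<union> T) (n + k)"
proof -
  obtain F where F: "(\<Union>i<n. F i) = S" "\<forall>i<n. \<forall>j<n. i \<noteq> j \<longrightarrow> F i \<inter> F j = {}"
      "\<forall>i<n. P (F i)"
    using assms(1) unfolding partition_into_def by blast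
  obtain G where G: "(\<Union>i<k. G i) = T" "\<forall>i<k. \<forall>j<k. i \<noteq> j \<longrightarrow> G i \<inter> G j = {}"
      "\<forall>i<k. P (G i)"
    using assms(2) unfolding partition_into_def by blast
  define H where "H i = (if i < n then F i else G (i - n))" for i
  have "(\<Union>i<n + k. H i) = (\<Union>i<n. F i) \<union> (\<Union>i<k. G i)"
  proof (intro equalityI subsetI)
    fix x assume "x \<in> (\<Union>i<n + k. H i)"
    then obtain i where "i < n + k" "x \<in> H i" by blast
    then show "x \<in> (\<Union>i<n. F i) \<union> (\<Union>i<k. G i)"
      unfolding H_def by (cases "i < n") auto
  next
    fix x assume "x \<in> (\<Union>i<n. F i) \<union> (\<Union>i<k. G i)"
    then consider i where "i < n" "x \<in> F i" | i where "i < k" "x \<in> G i" by blast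
    then show "x \<in> (\<Union>i<n + k. H i)"
    proof cases
      case (1 i)
      then show ?thesis unfolding H_def by force
    next
      case (2 i)
      then have "n + i < n + k" "x \<in> H (n + i)" unfolding H_def by auto
      then show ?thesis by blast
    qed
  qed
  moreover have "H i \<inter> H j = {}" if "i < n + k" "j < n + k" "i \<noteq> j" for i j
  proof -
    have "H i \<subseteq> S" if "i < n" for i
      using that F(1) unfolding H_def by auto
    moreover have "H i \<subseteq> T" if "\<not> i < n" "i < n + k" for i
      using that G(1) unfolding H_def by auto
    moreover have "i - n \<noteq> j - n" if "\<not> i < n" "\<not> j < n"
      using that \<open>i \<noteq> j\<close> by simp
    ultimately show ?thesis
      using that F(2) G(2) assms(3) unfolding H_def
      by (cases "i < n"; cases "j < n") (simp_all, blast+)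
  qed
  moreover have "P (H i)" if "i < n + k" for i
    using that F(3) G(3) unfolding H_def by auto
  ultimately show ?thesis
    unfolding partition_into_def using F(1) G(1) by blast
qed

lemma eq_of_mult_add_eq:
  fixes a b m s t :: nat
  assumes "a * m + s = b * m + t" and "s < m + t" and "t < m + s"
  shows "a = b"
proof (rule ccontr)
  assume "a \<noteq> b"
  then consider "a + 1 \<le> b" | "b + 1 \<le> a" by linarith
  then show False
  proof cases
    case 1
    then have "(a + 1) * m \<le> b * m" by (rule mult_right_mono) simp
    then show False using assms by (simp add: algebra_simps)
  next
    case 2
    then have "(b + 1) * m \<le> a * m" by (rule mult_right_mono) simp
    then show False using assms by (simp add: algebra_simps)
  qed
qed

definition weak_lift :: "nat \<Rightarrow> nat \<Rightarrow> nat set \<Rightarrow> nat set" where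
  "weak_lift m h B = {x. x mod m \<in> B \<and> (x div m = 0 \<or> h < x mod m)}"

text \<open>The union of the blocks \<open>{am - c .. am - c + q}\<close> for \<open>a \<in> A\<close>.\<close>
definition block_blowup :: "nat \<Rightarrow> nat \<Rightarrow> nat \<Rightarrow> nat set \<Rightarrow> nat set" where
  "block_blowup m c q A = {x. (x + c) mod m \<le> q \<and> (x + c) div m \<in> A}"

lemma weakly_sum_free_weak_lift:
  fixes m h q :: nat
  assumes B: "weakly_sum_free B" "\<forall>b\<in>B. b \<le> q"
    and "q < m" and "q \<le> 2 * h + 1" and "2 * q \<le> m + h"
  shows "weakly_sum_free (weak_lift m h B)"
  unfolding weakly_sum_free_def
proof (intro ballI impI notI)
  fix x y
  assume x: "x \<in> weak_lift m h B" and y: "y \<in> weak_lift m h B" and "x \<noteq> y"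
    and z: "x + y \<in> weak_lift m h B"
  define a r a' r' where "a = x div m" "r = x mod m" "a' = y div m" "r' = y mod m"
  have r: "r \<in> B" "r' \<in> B" "r \<le> q" "r' \<le> q"
    using x y B(2) unfolding weak_lift_def a_r_a'_r'_def by auto
  have sum: "x + y = (a + a') * m + (r + r')"
    unfolding a_r_a'_r'_def by (simp add: algebra_simps)
  show False
  proof (cases "r + r' < m")
    case True
    then have "(x + y) mod m = r + r'" "(x + y) div m = a + a'"
      unfolding sum by simp_all
    then have rr: "r + r' \<in> B"
      using z unfolding weak_lift_def by simp
    show False
    proof (cases "r = r'")
      case True
      then have "a \<noteq> a'"
        using \<open>x \<noteq> y\<close> unfolding a_r_a'_r'_def by (metis div_mult_mod_eq)
      then have "h < r"
        using x y True unfolding weak_lift_def a_r_a'_r'_def by auto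
      then show False
        using rr B(2) True \<open>q \<le> 2 * h + 1\<close> by fastforce
    next
      case False
      then show False
        using B(1) r rr unfolding weakly_sum_free_def by blast
    qed
  next
    case False
    define k where "k = a + a' + 1"
    have "x + y = k * m + (r + r' - m)"
      using sum False unfolding k_def by (simp add: algebra_simps)
    moreover have "r + r' - m < m"
      using r \<open>q < m\<close> by linarith
    ultimately have "(x + y) mod m = r + r' - m" "(x + y) div m = k"
      by simp_all
    then have "h < r + r' - m"
      using z unfolding weak_lift_def k_def by simp
    then show False
      using r \<open>2 * q \<le> m + h\<close> by linarith
  qed
qed

lemma sum_free_block_blowup:
  fixes m c q :: nat
  assumes "sum_free A" and "q + c < m" and "2 * q < m + c"
  shows "sum_free (block_blowup m c q A)"
  unfolding sum_free_def
proof (intro ballI notI)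
  fix x y
  assume x: "x \<in> block_blowup m c q A" and y: "y \<in> block_blowup m c q A"
    and z: "x + y \<in> block_blowup m c q A"
  define a u a' u' a'' u'' where
    "a = (x + c) div m" "u = (x + c) mod m" "a' = (y + c) div m" "u' = (y + c) mod m"
    "a'' = (x + y + c) div m" "u'' = (x + y + c) mod m"
  have u: "u \<le> q" "u' \<le> q" "u'' \<le> q" and a: "a \<in> A" "a' \<in> A" "a'' \<in> A"
    using x y z unfolding block_blowup_def a_u_a'_u'_a''_u''_def by auto
  have "a'' * m + (u'' + c) = (a + a') * m + (u + u')"
    using div_mult_mod_eq[of "x + c" m] div_mult_mod_eq[of "y + c" m]
      div_mult_mod_eq[of "x + y + c" m]
    unfolding a_u_a'_u'_a''_u''_def by (simp add: algebra_simps)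
  then have "a'' = a + a'"
    by (rule eq_of_mult_add_eq) (use u assms(2,3) in linarith)+
  then show False
    using a \<open>sum_free A\<close> unfolding sum_free_def by auto
qed

lemma weak_lift_Int_block_blowup:
  assumes "q + c < m" and "q \<le> c + h" and "0 \<notin> A"
  shows "weak_lift m h {1..q} \<inter> block_blowup m c q A = {}"
proof (intro equalityI subsetI)
  fix x assume x: "x \<in> weak_lift m h {1..q} \<inter> block_blowup m c q A"
  define a r where "a = x div m" "r = x mod m"
  have r: "1 \<le> r" "r \<le> q" "a = 0 \<or> h < r"
    using x unfolding weak_lift_def a_r_def by auto
  have e: "x + c = a * m + (r + c)" and "r + c < m"
    using r assms(1) unfolding a_r_def by simp_all
  then have "(x + c) mod m = r + c" "(x + c) div m = a"
    unfolding e by simp_all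
  then show "x \<in> {}"
    using x r assms(2,3) unfolding block_blowup_def by auto
qed simp

lemma atLeastAtMost_subset_weak_lift_Un_block_blowup:
  assumes m: "m = q + c + 1" and "c + h = q"
  shows "{1..p * m + q} \<subseteq> weak_lift m h {1..q} \<union> block_blowup m c q {1..p}"
proof
  fix x assume x: "x \<in> {1..p * m + q}"
  have blockI: "x \<in> block_blowup m c q {1..p}"
    if e: "x + c = b * m + u" and "u \<le> q" "1 \<le> b" "b \<le> p" for b u
  proof -
    have "u < m" using \<open>u \<le> q\<close> m by simp
    then have "(x + c) mod m = u" "(x + c) div m = b"
      unfolding e by simp_all
    then show ?thesis
      using that unfolding block_blowup_def by simp
  qed
  define a r where "a = x div m" "r = x mod m"
  have xe: "x = a * m + r"
    unfolding a_r_def by simp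
  have "r < m"
    unfolding a_r_def using m by simp
  have a_le: "a \<le> p"
  proof -
    have "a * m < (p + 1) * m"
      using x xe m by simp
    then have "a < p + 1"
      by (simp only: mult_less_cancel2)
    then show ?thesis by simp
  qed
  show "x \<in> weak_lift m h {1..q} \<union> block_blowup m c q {1..p}"
  proof (cases "x \<in> weak_lift m h {1..q}")
    case False
    then consider "r = 0" | "q < r" | "1 \<le> r" "r \<le> h" "1 \<le> a"
      unfolding weak_lift_def a_r_def by fastforce
    then show ?thesis
    proof cases
      case 1
      then have "1 \<le> a"
        using x xe by (cases a) simp_all
      then show ?thesis
        using blockI[of a c] xe 1 a_le assms by simp
    next
      case 2
      have "a * m + r \<le> p * m + q"
        using x xe by simp
      then have "a * m < p * m"
        using 2 by linarith
      then have "a + 1 \<le> p"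
        by (simp only: mult_less_cancel2) simp
      then show ?thesis
        using blockI[of "a + 1" "r + c - m"] xe 2 \<open>r < m\<close> assms by simp
    next
      case 3
      then show ?thesis
        using blockI[of a "r + c"] xe a_le assms by simp
    qed
  qed simp
qed

lemma block_blowup_subset_atLeastAtMost:
  assumes "q + c < m"
  shows "block_blowup m c q {1..p} \<subseteq> {1..p * m + q}"
proof
  fix x assume x: "x \<in> block_blowup m c q {1..p}"
  define b u where "b = (x + c) div m" "u = (x + c) mod m"
  have "1 \<le> b" "b \<le> p" "u \<le> q"
    using x unfolding block_blowup_def b_u_def by simp_all
  then have "m \<le> b * m" "b * m \<le> p * m"
    by simp_all
  moreover have "x + c = b * m + u"
    unfolding b_u_def by simp
  ultimately have "m \<le> x + c" "x + c \<le> p * m + q"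
    using \<open>u \<le> q\<close> by linarith+
  then show "x \<in> {1..p * m + q}"
    using assms by simp
qed

lemma partition_into_weak_lift:
  assumes "partition_into weakly_sum_free {1..q} n"
    and "q < m" and "q \<le> 2 * h + 1" and "2 * q \<le> m + h"
  shows "partition_into weakly_sum_free (S \<inter> weak_lift m h {1..q}) n"
proof (rule partition_into_vimage[OF assms(1), of _ "\<lambda>x. x mod m"])
  fix B assume "weakly_sum_free B" "B \<subseteq> {1..q}"
  then have "weakly_sum_free (weak_lift m h B)"
    by (intro weakly_sum_free_weak_lift[where q = q]) (use assms(2-4) in auto)
  then show "weakly_sum_free (S \<inter> weak_lift m h {1..q} \<inter> (\<lambda>x. x mod m) -` B)"
    by (rule weakly_sum_free_subset) (auto simp: weak_lift_def)
qed (auto simp: weak_lift_def)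

lemma partition_into_block_blowup:
  assumes "partition_into sum_free T k" and "q + c < m" and "2 * q < m + c"
  shows "partition_into sum_free (block_blowup m c q T) k"
proof (rule partition_into_vimage[OF assms(1), of _ "\<lambda>x. (x + c) div m"])
  fix A assume "sum_free A" "A \<subseteq> T"
  then have "block_blowup m c q T \<inter> (\<lambda>x. (x + c) div m) -` A = block_blowup m c q A"
    unfolding block_blowup_def by auto
  then show "sum_free (block_blowup m c q T \<inter> (\<lambda>x. (x + c) div m) -` A)"
    using sum_free_block_blowup[OF \<open>sum_free A\<close> assms(2,3)] by simp
qed (auto simp: block_blowup_def)

theorem theorem3p1:
  fixes p k q n :: nat
  assumes "p > 0" and "k > 0" and "q > 0" and "n > 0"
    and "partition_into weakly_sum_free {1..q} n"
    and "partition_into sum_free {1..p} k"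
  shows "partition_into weakly_sum_free
           {1 .. p * (q + nat \<lceil>real q / 2\<rceil> + 1) + q} (n + k)"
proof -
  define c h where "c = (q + 1) div 2" "h = q div 2"
  define m where "m = q + c + 1"
  have "nat \<lceil>real q / 2\<rceil> = c"
    unfolding c_h_def by (simp add: ceiling_unique[of "int ((q + 1) div 2)"]; linarith)
  then have interval: "{1 .. p * (q + nat \<lceil>real q / 2\<rceil> + 1) + q} = {1 .. p * m + q}"
    unfolding m_def by simp
  have ch: "c + h = q" "q \<le> 2 * c" "q \<le> 2 * h + 1"
    unfolding c_h_def by auto
  let ?D = "{1 .. p * m + q} \<inter> weak_lift m h {1..q}"
  let ?C = "block_blowup m c q {1..p}"
  have "partition_into weakly_sum_free ?D n"
    by (rule partition_into_weak_lift[OF assms(5)]) (use ch m_def in auto)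
  moreover have "partition_into weakly_sum_free ?C k"
  proof (rule partition_into_mono[OF sum_free_imp_weakly_sum_free])
    show "partition_into sum_free ?C k"
      by (rule partition_into_block_blowup[OF assms(6)]) (use ch m_def in auto)
  qed
  moreover have "?D \<inter> ?C = {}"
    using weak_lift_Int_block_blowup[of q c m h "{1..p}"] ch m_def by auto
  moreover have "?D \<union> ?C = {1 .. p * m + q}"
    using atLeastAtMost_subset_weak_lift_Un_block_blowup[OF m_def ch(1)]
      block_blowup_subset_atLeastAtMost[of q c m p] ch m_def by auto
  ultimately show ?thesis
    unfolding interval by (metis partition_into_Un)
qed

end
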